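(* Let $A\in\mathbb{R}^{d\times d}$, $B\in\mathbb{R}^{d\times p}$ with $\alpha(A)<0$, $\|A\|\le\kappa_A$, $\|B\|\le\kappa_B$ for constants $\kappa_A,\kappa_B>0$, and let $h=\frac{1}{15\kappa_A}$. Define $A'=e^{Ah}$ and $B'=\big[\int_0^he^{A(h-s)}ds\big]B$. Let $\widetilde{A}\in\mathbb{R}^{d\times d}$, $\widetilde{B}\in\mathbb{R}^{d\times p}$ satisfy $\|\widetilde{A}-A'\|\le\epsilon$ and $\|\widetilde{B}-B'\|\le\epsilon$ for some $\epsilon\le\frac{1}{15}$, and suppose $\|Ah\|\le\frac1{15}$. Define $$\hat{A}=\frac1h\sum_{k\ge1}\frac{(-1)^{k-1}}{k}(\widetilde{A}-I)^k,\qquad \hat{B}=\Big[\int_0^he^{\hat{A}t}dt\Big]^{-1}\widetilde{B}.$$ Then $$\|\hat{A}-A\|,\ \|\hat{B}-B\|\le\frac1h\Big(2+\frac{\kappa_B}{\kappa_A}\Big)\epsilon.$$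
   Context: $\alpha(A)=\max\{\Re(\lambda):\lambda\text{ eigenvalue of }A\}$; $\|\cdot\|$ is the spectral norm. In the paper, $\widetilde{A},\widetilde{B}$ are the least-squares estimates of the discretized dynamics $(A',B')$ produced by the identification algorithm, and $\hat{A},\hat{B}$ the recovered continuous-time estimates. *)

theory Defs
  imports "HOL-Analysis.Analysis"
begin

definition spec_norm :: "real^'n^'m \<Rightarrow> real" where
  "spec_norm M = onorm (\<lambda>x. M *v x)"

definition mpow :: "real^'n^'n \<Rightarrow> nat \<Rightarrow> real^'n^'n" where
  "mpow M k = ((\<lambda>X. M ** X) ^^ k) (mat 1)"

definition mexp :: "real^'n^'n \<Rightarrow> real^'n^'n" where
  "mexp M = (\<Sum>k. (1 / fact k) *\<^sub>R mpow M k)"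

definition cmat :: "real^'n^'n \<Rightarrow> complex^'n^'n" where
  "cmat M = (\<chi> i j. complex_of_real (M $ i $ j))"

definition eigenvalues :: "real^'n^'n \<Rightarrow> complex set" where
  "eigenvalues M = {c. \<exists>v. v \<noteq> 0 \<and> cmat M *v v = c *s v}"

definition spectral_abscissa :: "real^'n^'n \<Rightarrow> real" where
  "spectral_abscissa M = Max (Re ` eigenvalues M)"

text \<open>Matrix logarithm series  sum_{k>=1} (-1)^(k-1)/k X^k  (index shifted by one).\<close>
definition mlog_series :: "real^'n^'n \<Rightarrow> real^'n^'n" where
  "mlog_series X = (\<Sum>k. ((-1) ^ k / real (Suc k)) *\<^sub>R mpow X (Suc k))"

end

theory Submission
  imports Defs
begin

(* Square matrices with the spectral norm form a Banach algebra in which mexp is exp and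
   mlog_series is the series L of log (1 + x).  L inverts exp - 1 near 0 and is
   1/(1 - r)-Lipschitz on the ball of radius r, so h Ahat = L (At - 1) is within (50/43) eps
   of L (exp (h A) - 1) = h A.  For Bhat, G M = integral_0^h exp (t M) dt is Lipschitz in M and
   within (9/50) h of h I, hence G Ahat is invertible with inverse of norm at most 50/(41 h), and
   Bhat - B = (G Ahat)^-1 ((Bt - G A B) + (G A - G Ahat) B), where G A B is the discretized B'. *)

section \<open>Exponentials in Banach algebras\<close>

lemma norm_power_Suc_diff_le:
  fixes x y :: "'a::real_normed_algebra_1"
  assumes "norm x \<le> r" "norm y \<le> r"
  shows "norm (x ^ Suc n - y ^ Suc n) \<le> real (Suc n) * r ^ n * norm (x - y)"
proof (induction n)
  case 0
  then show ?case by simp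
next
  case (Suc n)
  have r: "0 \<le> r" using assms(1) norm_ge_zero order_trans by blast
  have "norm (x ^ Suc (Suc n) - y ^ Suc (Suc n))
      = norm (x * (x ^ Suc n - y ^ Suc n) + (x - y) * y ^ Suc n)"
    by (simp add: algebra_simps)
  also have "\<dots> \<le> norm x * norm (x ^ Suc n - y ^ Suc n) + norm (x - y) * norm (y ^ Suc n)"
    by (intro norm_triangle_le add_mono norm_mult_ineq)
  also have "\<dots> \<le> r * (real (Suc n) * r ^ n * norm (x - y)) + norm (x - y) * r ^ Suc n"
    using Suc.IH assms r norm_power_ineq[of y "Suc n"] power_mono[OF assms(2) norm_ge_zero, of "Suc n"]
    by (intro add_mono mult_mono) auto
  also have "\<dots> = real (Suc (Suc n)) * r ^ Suc n * norm (x - y)"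
    by (simp add: algebra_simps)
  finally show ?case .
qed

lemma norm_exp_diff_le:
  fixes x y :: "'a::{real_normed_algebra_1,banach}"
  assumes "norm x \<le> r" "norm y \<le> r"
  shows "norm (exp x - exp y) \<le> exp r * norm (x - y)"
proof -
  have "(\<lambda>n. (x ^ n - y ^ n) /\<^sub>R fact n) sums (exp x - exp y)"
    unfolding scaleR_diff_right by (intro sums_diff exp_converges)
  then have terms: "(\<lambda>n. (x ^ Suc n - y ^ Suc n) /\<^sub>R fact (Suc n)) sums (exp x - exp y)"
    by (subst sums_Suc_iff) simp
  have bounds: "(\<lambda>n. r ^ n /\<^sub>R fact n * norm (x - y)) sums (exp r * norm (x - y))"
    by (intro sums_mult2 exp_converges)
  have term_le: "norm ((x ^ Suc n - y ^ Suc n) /\<^sub>R fact (Suc n)) \<le> r ^ n /\<^sub>R fact n * norm (x - y)" for n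
  proof -
    have "norm ((x ^ Suc n - y ^ Suc n) /\<^sub>R fact (Suc n)) = norm (x ^ Suc n - y ^ Suc n) / fact (Suc n)"
      by (simp add: divide_inverse mult.commute del: power_Suc)
    also have "\<dots> \<le> real (Suc n) * r ^ n * norm (x - y) / fact (Suc n)"
      by (intro divide_right_mono norm_power_Suc_diff_le assms) simp
    also have "\<dots> = r ^ n /\<^sub>R fact n * norm (x - y)"
      by (simp add: fact_Suc divide_inverse)
    finally show ?thesis .
  qed
  show ?thesis
    by (rule norm_sums_le[OF terms bounds term_le])
qed

lemma continuous_on_exp_scaleR:
  fixes a :: "'a::{real_normed_algebra_1,banach}"
  assumes "continuous_on S f"
  shows "continuous_on S (\<lambda>t. exp (f t *\<^sub>R a))"
proof -
  have "continuous_on UNIV (\<lambda>t. exp (t *\<^sub>R a))"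
    by (rule continuous_at_imp_continuous_on)
      (auto intro: has_vector_derivative_continuous exp_scaleR_has_vector_derivative_right)
  then show ?thesis
    using continuous_on_compose2[OF _ assms] by blast
qed

lemma integral_reflect_interval:
  fixes F :: "real \<Rightarrow> 'a::banach"
  assumes "F integrable_on {0..h}"
  shows "integral {0..h} (\<lambda>s. F (h - s)) = integral {0..h} F"
proof -
  have "(F has_integral integral {0..h} F) (cbox 0 h)"
    using integrable_integral[OF assms] by simp
  moreover have "(\<lambda>s. - s + h) ` {0..h} = {0..h}"
    by (auto intro!: image_eqI[where x = "h - s" for s])
  ultimately have "((\<lambda>s. F (h - s)) has_integral integral {0..h} F) {0..h}"
    using has_integral_affinity[of F _ 0 h "-1" h] by simp
  then show ?thesis
    by (rule integral_unique)
qed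

lemma norm_integral_exp_scaleR_diff_le:
  fixes a b :: "'a::{real_normed_algebra_1,banach}"
  assumes h: "0 \<le> h" and a: "h * norm a \<le> r" and b: "h * norm b \<le> r"
  shows "norm (integral {0..h} (\<lambda>t. exp (t *\<^sub>R a)) - integral {0..h} (\<lambda>t. exp (t *\<^sub>R b)))
    \<le> exp r * norm (a - b) * h\<^sup>2"
proof -
  have cont: "continuous_on {0..h} (\<lambda>t. exp (t *\<^sub>R c))" for c :: 'a
    by (intro continuous_on_exp_scaleR continuous_on_id)
  have "norm (exp (t *\<^sub>R a) - exp (t *\<^sub>R b)) \<le> exp r * norm (a - b) * h" if t: "t \<in> {0..h}" for t
  proof -
    have "norm (t *\<^sub>R c) \<le> h * norm c" for c :: 'a
      using t by (simp add: mult_right_mono)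
    then have "norm (exp (t *\<^sub>R a) - exp (t *\<^sub>R b)) \<le> exp r * norm (t *\<^sub>R a - t *\<^sub>R b)"
      using a b by (intro norm_exp_diff_le) (auto intro: order_trans)
    also have "\<dots> \<le> exp r * (h * norm (a - b))"
      using t by (simp add: scaleR_diff_right[symmetric] mult_right_mono)
    finally show ?thesis
      by (simp add: mult_ac)
  qed
  then have "norm (integral {0..h} (\<lambda>t. exp (t *\<^sub>R a) - exp (t *\<^sub>R b))) \<le> exp r * norm (a - b) * h * (h - 0)"
    using h cont by (intro integral_bound continuous_on_diff) auto
  then show ?thesis
    using cont by (simp add: integral_diff integrable_continuous_interval power2_eq_square mult_ac)
qed

section \<open>The logarithm series\<close>

definition log1p_series :: "'a::{real_normed_algebra_1,banach} \<Rightarrow> 'a" where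
  "log1p_series x = (\<Sum>k. ((-1) ^ k / real (Suc k)) *\<^sub>R x ^ Suc k)"

lemma summable_log1p_series:
  fixes x :: "'a::{real_normed_algebra_1,banach}"
  assumes "norm x < 1"
  shows "summable (\<lambda>k. ((-1) ^ k / real (Suc k)) *\<^sub>R x ^ Suc k)"
proof (rule summable_comparison_test)
  show "summable (\<lambda>k. norm x ^ Suc k)"
    using assms by (simp add: summable_geometric)
  have "norm (((-1) ^ k / real (Suc k)) *\<^sub>R x ^ Suc k) \<le> norm x ^ Suc k" for k
  proof -
    have "norm (((-1) ^ k / real (Suc k)) *\<^sub>R x ^ Suc k) = norm (x ^ Suc k) / real (Suc k)"
      by (simp add: power_abs)
    also have "\<dots> \<le> norm (x ^ Suc k)"
      by (simp add: divide_le_eq mult_le_cancel_left1)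
    also have "\<dots> \<le> norm x ^ Suc k"
      by (rule norm_power_ineq)
    finally show ?thesis .
  qed
  then show "\<exists>N. \<forall>k\<ge>N. norm (((-1) ^ k / real (Suc k)) *\<^sub>R x ^ Suc k) \<le> norm x ^ Suc k"
    by blast
qed

lemma norm_log1p_series_diff_le:
  fixes x y :: "'a::{real_normed_algebra_1,banach}"
  assumes "norm x \<le> r" "norm y \<le> r" "r < 1"
  shows "norm (log1p_series x - log1p_series y) \<le> norm (x - y) / (1 - r)"
proof -
  have r: "0 \<le> r" using assms(1) norm_ge_zero order_trans by blast
  have terms: "(\<lambda>k. ((-1) ^ k / real (Suc k)) *\<^sub>R (x ^ Suc k - y ^ Suc k))
      sums (log1p_series x - log1p_series y)"
    unfolding log1p_series_def scaleR_diff_right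
    using assms by (intro sums_diff summable_sums summable_log1p_series) auto
  have bounds: "(\<lambda>k. r ^ k * norm (x - y)) sums (1 / (1 - r) * norm (x - y))"
    using assms r by (intro sums_mult2 geometric_sums) auto
  have term_le: "norm (((-1) ^ k / real (Suc k)) *\<^sub>R (x ^ Suc k - y ^ Suc k)) \<le> r ^ k * norm (x - y)" for k
  proof -
    have "norm (((-1) ^ k / real (Suc k)) *\<^sub>R (x ^ Suc k - y ^ Suc k))
        = norm (x ^ Suc k - y ^ Suc k) / real (Suc k)"
      by (simp add: power_abs)
    also have "\<dots> \<le> real (Suc k) * r ^ k * norm (x - y) / real (Suc k)"
      by (intro divide_right_mono norm_power_Suc_diff_le assms) simp
    finally show ?thesis by simp
  qed
  show ?thesis
    using norm_sums_le[OF terms bounds term_le] by simp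
qed

lemma has_vector_derivative_power_commuting:
  fixes g :: "real \<Rightarrow> 'a::real_normed_algebra_1"
  assumes g: "(g has_vector_derivative g') (at s within S)" and comm: "g s * g' = g' * g s"
  shows "((\<lambda>t. g t ^ Suc n) has_vector_derivative (real (Suc n) *\<^sub>R (g s ^ n * g'))) (at s within S)"
proof (induction n)
  case 0
  then show ?case using g by simp
next
  case (Suc n)
  have "((\<lambda>t. g t ^ Suc (Suc n)) has_vector_derivative
          (g s * (real (Suc n) *\<^sub>R (g s ^ n * g')) + g' * g s ^ Suc n)) (at s within S)"
    using has_vector_derivative_mult[OF g Suc.IH] by (simp only: power_Suc)
  moreover have "g s * (real (Suc n) *\<^sub>R (g s ^ n * g')) + g' * g s ^ Suc n
      = real (Suc (Suc n)) *\<^sub>R (g s ^ Suc n * g')"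
  proof -
    define z where "z = g s ^ Suc n * g'"
    have "g s * (real (Suc n) *\<^sub>R (g s ^ n * g')) = real (Suc n) *\<^sub>R z"
      by (simp add: z_def mult.assoc)
    moreover have "g' * g s ^ Suc n = z"
      unfolding z_def by (rule power_commuting_commutes[OF comm, symmetric])
    moreover have "real (Suc n) *\<^sub>R z + z = real (Suc (Suc n)) *\<^sub>R z"
      by (simp add: scaleR_add_left scaleR_2)
    ultimately show ?thesis
      by (simp only: z_def)
  qed
  ultimately show ?case
    by simp
qed

lemma sums_by_termwise_derivative:
  fixes f :: "nat \<Rightarrow> real \<Rightarrow> 'a::banach"
  assumes deriv: "\<And>n s. s \<in> {0..1} \<Longrightarrow> (f n has_vector_derivative f' n s) (at s within {0..1})"
    and unif: "uniform_limit {0..1} (\<lambda>n s. \<Sum>i<n. f' i s) (\<lambda>_. c) sequentially"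
    and start: "\<And>n. f n 0 = 0"
  shows "(\<lambda>n. f n 1) sums c"
proof -
  have "\<exists>g. \<forall>s\<in>{0..1}. (\<lambda>n. f n s) sums g s \<and> (g has_derivative (\<lambda>t. t *\<^sub>R c)) (at s within {0..1})"
  proof (rule has_derivative_series[where x = 0])
    show "(f n has_derivative (\<lambda>t. t *\<^sub>R f' n s)) (at s within {0..1})" if "s \<in> {0..1}" for n s
      using deriv[OF that] by (simp add: has_vector_derivative_def)
    show "\<forall>\<^sub>F n in sequentially. \<forall>s\<in>{0..1}. \<forall>t. norm ((\<Sum>i<n. t *\<^sub>R f' i s) - t *\<^sub>R c) \<le> e * norm t"
      if "e > 0" for e
      using uniform_limitD[OF unif that]
    proof (rule eventually_mono, intro ballI allI)
      fix n and s t :: real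
      assume close: "\<forall>s\<in>{0..1}. dist (\<Sum>i<n. f' i s) c < e" and s: "s \<in> {0..1}"
      have "norm ((\<Sum>i<n. t *\<^sub>R f' i s) - t *\<^sub>R c) = \<bar>t\<bar> * norm ((\<Sum>i<n. f' i s) - c)"
        by (simp add: scaleR_sum_right[symmetric] scaleR_diff_right[symmetric])
      also have "\<dots> \<le> \<bar>t\<bar> * e"
        using bspec[OF close s] by (intro mult_left_mono) (simp_all add: dist_norm)
      finally show "norm ((\<Sum>i<n. t *\<^sub>R f' i s) - t *\<^sub>R c) \<le> e * norm t"
        by (simp add: mult.commute)
    qed
  qed (auto simp: start intro: sums_zero)
  then obtain g where sums: "\<And>s. s \<in> {0..1} \<Longrightarrow> (\<lambda>n. f n s) sums g s"
    and g': "\<And>s. s \<in> {0..1} \<Longrightarrow> (g has_derivative (\<lambda>t. t *\<^sub>R c)) (at s within {0..1})"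
    by blast
  have "\<exists>k. \<forall>s\<in>{0..1}. g s - s *\<^sub>R c = k"
  proof (rule has_derivative_zero_constant)
    fix s :: real
    assume "s \<in> {0..1}"
    from has_derivative_diff[OF g'[OF this] has_derivative_scaleR_left[OF has_derivative_ident, where x=c]]
    show "((\<lambda>s. g s - s *\<^sub>R c) has_derivative (\<lambda>t. 0)) (at s within {0..1})"
      by simp
  qed simp
  then obtain k where k: "\<And>s. s \<in> {0..1} \<Longrightarrow> g s - s *\<^sub>R c = k"
    by blast
  have "g 0 = 0"
    using sums[of 0] start sums_unique2[OF _ sums_zero] by simp
  then have "g 1 = c"
    using k[of 0] k[of 1] by simp
  then show ?thesis
    using sums[of 1] by simp
qed

lemma has_vector_derivative_log1p_series_term:
  fixes u :: "real \<Rightarrow> 'a::real_normed_algebra_1"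
  assumes u: "(u has_vector_derivative u') (at s within S)" and comm: "u s * u' = u' * u s"
  shows "((\<lambda>t. ((-1) ^ k / real (Suc k)) *\<^sub>R u t ^ Suc k) has_vector_derivative (- u s) ^ k * u')
    (at s within S)"
proof -
  have "((\<lambda>t. ((-1) ^ k / real (Suc k)) *\<^sub>R u t ^ Suc k) has_vector_derivative
      ((-1) ^ k / real (Suc k)) *\<^sub>R (real (Suc k) *\<^sub>R (u s ^ k * u'))) (at s within S)"
    by (intro bounded_linear.has_vector_derivative[OF bounded_linear_scaleR_right]
        has_vector_derivative_power_commuting u comm)
  moreover have "((-1) ^ k / real (Suc k)) *\<^sub>R (real (Suc k) *\<^sub>R (u s ^ k * u')) = (-1::real) ^ k *\<^sub>R (u s ^ k * u')"
    by simp
  moreover have "\<dots> = (- u s) ^ k * u'"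
    by (simp add: scaleR_conv_of_real power_minus' mult.assoc)
  ultimately show ?thesis
    by simp
qed

lemma uniform_limit_alternating_geometric_sum:
  fixes u :: "real \<Rightarrow> 'a::real_normed_algebra_1"
  assumes small: "\<And>s. s \<in> S \<Longrightarrow> norm (u s) \<le> r" and r: "0 \<le> r" "r < 1"
  shows "uniform_limit S (\<lambda>n s. \<Sum>i<n. (- u s) ^ i * ((1 + u s) * y)) (\<lambda>_. y) sequentially"
proof (rule uniform_limitI)
  fix e :: real
  assume "e > 0"
  have telescope: "(\<Sum>i<n. (- u s) ^ i * ((1 + u s) * y)) = y - (- u s) ^ n * y" for n s
  proof -
    have "(\<Sum>i<n. (- u s) ^ i * ((1 + u s) * y)) = (\<Sum>i<n. (- u s) ^ i - (- u s) ^ Suc i) * y"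
      by (simp add: sum_distrib_right algebra_simps power_Suc2 del: power_Suc)
    then show ?thesis
      by (simp only: sum_lessThan_telescope') (simp add: algebra_simps)
  qed
  have "(\<lambda>n. r ^ n * norm y) \<longlonglongrightarrow> 0 * norm y"
    using r by (intro tendsto_mult_right LIMSEQ_power_zero) simp
  then have "\<forall>\<^sub>F n in sequentially. r ^ n * norm y < e"
    using \<open>e > 0\<close> by (simp add: order_tendstoD(2))
  then show "\<forall>\<^sub>F n in sequentially. \<forall>s\<in>S. dist (\<Sum>i<n. (- u s) ^ i * ((1 + u s) * y)) y < e"
  proof (rule eventually_mono, intro ballI)
    fix n and s :: real
    assume n: "r ^ n * norm y < e" and s: "s \<in> S"
    have "norm ((- u s) ^ n * y) \<le> norm (- u s) ^ n * norm y"
      by (intro order_trans[OF norm_mult_ineq] mult_right_mono norm_power_ineq norm_ge_zero)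
    also have "\<dots> \<le> r ^ n * norm y"
      using small[OF s] by (intro mult_right_mono power_mono) auto
    finally show "dist (\<Sum>i<n. (- u s) ^ i * ((1 + u s) * y)) y < e"
      using n by (simp add: telescope dist_norm)
  qed
qed

lemma log1p_series_exp_minus_one:
  fixes y :: "'a::{real_normed_algebra_1,banach}"
  assumes y: "norm y \<le> 1/2"
  shows "log1p_series (exp y - 1) = y"
proof -
  define u where "u s = exp (s *\<^sub>R y) - 1" for s :: real
  \<comment> \<open>Since u' = (1 + u) y, the termwise derivatives of log1p_series (u s) sum
    telescopically to y - (- u s)^n y.\<close>
  have u_deriv: "(u has_vector_derivative (1 + u s) * y) (at s within {0..1})" for s
    using has_vector_derivative_diff[OF exp_scaleR_has_vector_derivative_right has_vector_derivative_const]
    by (simp add: u_def[abs_def])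
  have u_comm: "u s * ((1 + u s) * y) = (1 + u s) * y * u s" for s
    using exp_times_scaleR_commute[of s y] by (simp add: u_def algebra_simps) (metis mult.assoc)
  have u_small: "norm (u s) \<le> 7/8" if "s \<in> {0..1}" for s
  proof -
    have sy: "norm (s *\<^sub>R y) \<le> 1/2"
      using that y mult_left_le_one_le[of "norm y" s] by simp
    have "norm (exp (s *\<^sub>R y) - exp 0) \<le> exp (1/2) * norm (s *\<^sub>R y - 0)"
      by (rule norm_exp_diff_le[OF sy]) simp
    also have "\<dots> \<le> exp (1/2) * (1/2)"
      using sy by (intro mult_left_mono) auto
    also have "\<dots> \<le> 7/8"
      using exp_bound[of "1/2::real"] by (simp add: power2_eq_square)
    finally show ?thesis
      by (simp add: u_def)
  qed
  have "(\<lambda>k. ((-1) ^ k / real (Suc k)) *\<^sub>R u 1 ^ Suc k) sums y"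
  proof (rule sums_by_termwise_derivative[where f = "\<lambda>k s. ((-1) ^ k / real (Suc k)) *\<^sub>R u s ^ Suc k"])
    show "((\<lambda>s. ((-1) ^ k / real (Suc k)) *\<^sub>R u s ^ Suc k) has_vector_derivative
        (- u s) ^ k * ((1 + u s) * y)) (at s within {0..1})" for k s
      by (intro has_vector_derivative_log1p_series_term u_deriv u_comm)
    show "uniform_limit {0..1} (\<lambda>n s. \<Sum>i<n. (- u s) ^ i * ((1 + u s) * y)) (\<lambda>_. y) sequentially"
      using u_small by (rule uniform_limit_alternating_geometric_sum) auto
  qed (simp add: u_def)
  then show ?thesis
    unfolding log1p_series_def by (simp add: u_def sums_iff)
qed

lemma log1p_series_perturbation:
  fixes x y :: "'a::{real_normed_algebra_1,banach}"
  assumes y: "norm y \<le> 1/15" and x: "norm (x - exp y) \<le> \<epsilon>" and \<epsilon>: "\<epsilon> \<le> 1/15"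
  shows "norm (x - 1) < 1" and "norm (log1p_series (x - 1) - y) \<le> 50/43 * \<epsilon>"
proof -
  have "norm (exp y - exp 0) \<le> exp (1/15) * norm (y - 0)"
    using y by (intro norm_exp_diff_le) auto
  also have "\<dots> \<le> 27/25 * (1/15)"
    using y exp_bound[of "1/15::real"] by (intro mult_mono) (auto simp: power2_eq_square)
  finally have exp_y: "norm (exp y - 1) \<le> 9/125"
    by simp
  have "norm (x - 1) \<le> \<epsilon> + 9/125"
    using x exp_y by (rule norm_diff_triangle_le)
  then have x_1: "norm (x - 1) \<le> 7/50"
    using \<epsilon> by simp
  then show "norm (x - 1) < 1"
    by simp
  have "norm (log1p_series (x - 1) - log1p_series (exp y - 1)) \<le> norm ((x - 1) - (exp y - 1)) / (1 - 7/50)"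
    using x_1 exp_y by (intro norm_log1p_series_diff_le) auto
  then show "norm (log1p_series (x - 1) - y) \<le> 50/43 * \<epsilon>"
    using log1p_series_exp_minus_one[of y] y x by simp
qed

section \<open>The spectral norm\<close>

lemma spec_norm_nonneg: "0 \<le> spec_norm M"
  unfolding spec_norm_def by (rule onorm_pos_le) (rule matrix_vector_mul_bounded_linear)

lemma norm_matrix_vector_mult_le: "norm (M *v x) \<le> spec_norm M * norm x"
  unfolding spec_norm_def by (rule onorm) (rule matrix_vector_mul_bounded_linear)

lemma spec_norm_le: "(\<And>x. norm (M *v x) \<le> b * norm x) \<Longrightarrow> spec_norm M \<le> b"
  unfolding spec_norm_def by (rule onorm_le)

lemma spec_norm_eq_0_iff: "spec_norm M = 0 \<longleftrightarrow> M = 0"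
  unfolding spec_norm_def
  by (subst onorm_eq_0) (auto simp: matrix_vector_mul_bounded_linear matrix_eq)

lemma spec_norm_zero: "spec_norm 0 = 0"
  by (simp add: spec_norm_eq_0_iff)

lemma spec_norm_add_le: "spec_norm (M + N) \<le> spec_norm M + spec_norm N"
  unfolding spec_norm_def matrix_vector_mult_add_rdistrib
  by (intro onorm_triangle matrix_vector_mul_bounded_linear)

lemma spec_norm_scaleR: "spec_norm (c *\<^sub>R M) = \<bar>c\<bar> * spec_norm M"
  unfolding spec_norm_def scaleR_matrix_vector_assoc[symmetric]
  by (intro onorm_scaleR matrix_vector_mul_bounded_linear)

lemma spec_norm_minus_commute: "spec_norm (M - N) = spec_norm (N - M)"
  using spec_norm_scaleR[of "-1" "N - M"] by simp

lemma spec_norm_matrix_mult_le: "spec_norm (M ** N) \<le> spec_norm M * spec_norm N"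
  unfolding spec_norm_def matrix_vector_mul_assoc[symmetric]
  using onorm_compose[OF matrix_vector_mul_bounded_linear matrix_vector_mul_bounded_linear]
  by (simp add: o_def)

lemma spec_norm_mat_1: "spec_norm (mat 1 :: real^'n^'n) = 1"
proof -
  have "(*v) (mat 1 :: real^'n^'n) = (\<lambda>x. x)"
    by (rule ext) simp
  then show ?thesis
    unfolding spec_norm_def by (simp add: onorm_id)
qed

lemma norm_le_spec_norm: "norm (M :: real^'n^'m) \<le> real CARD('m) * real CARD('n) * spec_norm M"
proof -
  have "norm M \<le> (\<Sum>i\<in>UNIV. norm (M $ i))"
    unfolding norm_vec_def by (rule L2_set_le_sum) simp
  also have "\<dots> \<le> (\<Sum>i\<in>(UNIV::'m set). \<Sum>j\<in>(UNIV::'n set). spec_norm M)"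
    unfolding spec_norm_def
    by (intro sum_mono order_trans[OF norm_le_l1_cart] matrix_component_le_onorm)
  finally show ?thesis by simp
qed

lemma spec_norm_le_norm: "spec_norm (M :: real^'n^'m) \<le> real CARD('m) * real CARD('n) * norm M"
  unfolding spec_norm_def
  by (intro onorm_le_matrix_component order_trans[OF component_le_norm_cart Finite_Cartesian_Product.norm_nth_le])

lemma matrix_add_rdistrib: "((A :: 'a::semiring_1^'n^'m) + B) ** C = A ** C + B ** C"
  by (simp add: matrix_matrix_mult_def vec_eq_iff sum.distrib distrib_right)

lemma matrix_diff_ldistrib: "(A :: 'a::ring_1^'n^'m) ** (B - C) = A ** B - A ** C"
  by (simp add: matrix_matrix_mult_def vec_eq_iff sum_subtractf right_diff_distrib)

lemma matrix_diff_rdistrib: "((A :: 'a::ring_1^'n^'m) - B) ** C = A ** C - B ** C"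
  by (simp add: matrix_matrix_mult_def vec_eq_iff sum_subtractf left_diff_distrib)

lemma matrix_inv_right: "invertible M \<Longrightarrow> M ** matrix_inv M = mat 1"
  unfolding invertible_def matrix_inv_def by (rule someI_ex[THEN conjunct1])

lemma matrix_inv_left: "invertible M \<Longrightarrow> matrix_inv M ** M = mat 1"
  unfolding invertible_def matrix_inv_def by (rule someI_ex[THEN conjunct2])

lemma invertible_near_scaled_identity:
  fixes M :: "real^'n^'n"
  assumes M: "spec_norm (M - c *\<^sub>R mat 1) \<le> \<delta>" and \<delta>: "\<delta> < c"
  shows "invertible M" and "spec_norm (matrix_inv M) \<le> 1 / (c - \<delta>)"
proof -
  have lower: "(c - \<delta>) * norm x \<le> norm (M *v x)" for x
  proof -
    have "c * norm x = norm (M *v x - (M - c *\<^sub>R mat 1) *v x)"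
      using \<delta> spec_norm_nonneg[of "M - c *\<^sub>R mat 1"] M
      by (simp add: matrix_vector_mult_diff_rdistrib scaleR_matrix_vector_assoc[symmetric])
    also have "\<dots> \<le> norm (M *v x) + norm ((M - c *\<^sub>R mat 1) *v x)"
      by (rule norm_triangle_ineq4)
    also have "\<dots> \<le> norm (M *v x) + \<delta> * norm x"
      using norm_matrix_vector_mult_le[of "M - c *\<^sub>R mat 1" x] M
      by (meson add_left_mono order_trans mult_right_mono norm_ge_zero)
    finally show ?thesis
      by (simp add: algebra_simps)
  qed
  have "M *v x = 0 \<Longrightarrow> x = 0" for x
    using lower[of x] \<delta> by (simp add: mult_le_0_iff)
  then show inv: "invertible M"
    by (simp add: invertible_left_inverse matrix_left_invertible_ker)
  show "spec_norm (matrix_inv M) \<le> 1 / (c - \<delta>)"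
  proof (rule spec_norm_le)
    fix v
    have "M *v (matrix_inv M *v v) = v"
      by (simp add: matrix_vector_mul_assoc matrix_inv_right[OF inv])
    then show "norm (matrix_inv M *v v) \<le> 1 / (c - \<delta>) * norm v"
      using lower[of "matrix_inv M *v v"] \<delta> by (simp add: field_simps)
  qed
qed

lemma spec_norm_matrix_inv_mult_diff_le:
  fixes M N :: "real^'n^'n" and B C :: "real^'p^'n"
  assumes "invertible M"
  shows "spec_norm (matrix_inv M ** C - B)
    \<le> spec_norm (matrix_inv M) * (spec_norm (C - N ** B) + spec_norm (N - M) * spec_norm B)"
proof -
  have "matrix_inv M ** C - B = matrix_inv M ** ((C - N ** B) + (N - M) ** B)"
    by (simp add: matrix_diff_ldistrib matrix_diff_rdistrib matrix_add_ldistrib matrix_mul_assoc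
        matrix_inv_left[OF assms])
  also have "spec_norm \<dots> \<le> spec_norm (matrix_inv M) * (spec_norm (C - N ** B) + spec_norm (N - M) * spec_norm B)"
    by (intro order_trans[OF spec_norm_matrix_mult_le] mult_left_mono spec_norm_nonneg
        order_trans[OF spec_norm_add_le] add_left_mono spec_norm_matrix_mult_le)
  finally show ?thesis .
qed

section \<open>Square matrices as a Banach algebra\<close>

(* A type of its own, because real^'n^'n already carries the Frobenius norm. *)
typedef 'n sqmat = "UNIV :: (real^'n^'n) set"
  morphisms mat_of sqmat_of
  by simp

setup_lifting type_definition_sqmat

instantiation sqmat :: (finite) real_normed_vector
begin

lift_definition zero_sqmat :: "'a sqmat" is 0 .
lift_definition plus_sqmat :: "'a sqmat \<Rightarrow> 'a sqmat \<Rightarrow> 'a sqmat" is "(+)" .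
lift_definition minus_sqmat :: "'a sqmat \<Rightarrow> 'a sqmat \<Rightarrow> 'a sqmat" is "(-)" .
lift_definition uminus_sqmat :: "'a sqmat \<Rightarrow> 'a sqmat" is uminus .
lift_definition scaleR_sqmat :: "real \<Rightarrow> 'a sqmat \<Rightarrow> 'a sqmat" is scaleR .
lift_definition norm_sqmat :: "'a sqmat \<Rightarrow> real" is spec_norm .
lift_definition dist_sqmat :: "'a sqmat \<Rightarrow> 'a sqmat \<Rightarrow> real" is "\<lambda>M N. spec_norm (M - N)" .
lift_definition sgn_sqmat :: "'a sqmat \<Rightarrow> 'a sqmat" is "\<lambda>M. inverse (spec_norm M) *\<^sub>R M" .

definition uniformity_sqmat :: "('a sqmat \<times> 'a sqmat) filter" where
  "uniformity_sqmat = (INF e\<in>{0<..}. principal {(x, y). dist x y < e})"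

definition open_sqmat :: "'a sqmat set \<Rightarrow> bool" where
  "open_sqmat U \<longleftrightarrow> (\<forall>x\<in>U. eventually (\<lambda>(x', y). x' = x \<longrightarrow> y \<in> U) uniformity)"

instance
  by standard
    (simp_all add: uniformity_sqmat_def open_sqmat_def,
     (transfer; simp add: algebra_simps spec_norm_eq_0_iff spec_norm_add_le spec_norm_scaleR)+)

end

instantiation sqmat :: (finite) real_normed_algebra_1
begin

lift_definition times_sqmat :: "'a sqmat \<Rightarrow> 'a sqmat \<Rightarrow> 'a sqmat" is "(**)" .
lift_definition one_sqmat :: "'a sqmat" is "mat 1" .

instance
proof
  fix x y z :: "'a sqmat" and a :: real
  show "x * y * z = x * (y * z)" by transfer (simp add: matrix_mul_assoc)
  show "1 * x = x" by transfer simp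
  show "x * 1 = x" by transfer simp
  show "(x + y) * z = x * z + y * z" by transfer (simp add: matrix_add_rdistrib)
  show "x * (y + z) = x * y + x * z" by transfer (simp add: matrix_add_ldistrib)
  show "(0 :: 'a sqmat) \<noteq> 1" by transfer (simp add: vec_eq_iff mat_def)
  show "a *\<^sub>R x * y = a *\<^sub>R (x * y)" by transfer (simp add: scalar_matrix_assoc)
  show "x * a *\<^sub>R y = a *\<^sub>R (x * y)" by transfer (simp add: matrix_scalar_ac scalar_matrix_assoc)
  show "norm (1 :: 'a sqmat) = 1" by transfer (rule spec_norm_mat_1)
  show "norm (x * y) \<le> norm x * norm y" by transfer (rule spec_norm_matrix_mult_le)
qed

end

lemma bounded_linear_mat_of: "bounded_linear (mat_of :: 'n::finite sqmat \<Rightarrow> real^'n^'n)"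
proof (rule bounded_linear_intro[where K = "real CARD('n) * real CARD('n)"])
  fix x y :: "'n sqmat" and r :: real
  show "mat_of (x + y) = mat_of x + mat_of y" by transfer simp
  show "mat_of (r *\<^sub>R x) = r *\<^sub>R mat_of x" by transfer simp
  show "norm (mat_of x) \<le> norm x * (real CARD('n) * real CARD('n))"
    using norm_le_spec_norm[of "mat_of x"] by (simp add: norm_sqmat.rep_eq mult_ac)
qed

lemma bounded_linear_sqmat_of: "bounded_linear (sqmat_of :: real^'n^'n \<Rightarrow> 'n::finite sqmat)"
proof (rule bounded_linear_intro[where K = "real CARD('n) * real CARD('n)"])
  fix x y :: "real^'n^'n" and r :: real
  show "sqmat_of (x + y) = sqmat_of x + sqmat_of y" by (simp add: plus_sqmat.abs_eq)
  show "sqmat_of (r *\<^sub>R x) = r *\<^sub>R sqmat_of x" by (simp add: scaleR_sqmat.abs_eq)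
  show "norm (sqmat_of x) \<le> norm x * (real CARD('n) * real CARD('n))"
    using spec_norm_le_norm[of x] by (simp add: norm_sqmat.abs_eq mult_ac)
qed

instance sqmat :: (finite) banach
proof
  fix X :: "nat \<Rightarrow> 'a sqmat"
  assume "Cauchy X"
  then have "Cauchy (\<lambda>n. mat_of (X n))"
    by (rule bounded_linear.Cauchy[OF bounded_linear_mat_of])
  then obtain L where "(\<lambda>n. mat_of (X n)) \<longlonglongrightarrow> L"
    by (auto simp: Cauchy_convergent_iff convergent_def)
  then have "(\<lambda>n. sqmat_of (mat_of (X n))) \<longlonglongrightarrow> sqmat_of L"
    by (rule bounded_linear.tendsto[OF bounded_linear_sqmat_of])
  then show "convergent X"
    by (auto simp: mat_of_inverse convergent_def)
qed

lemma mat_of_sqmat_of [simp]: "mat_of (sqmat_of M) = M"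
  by (rule sqmat_of_inverse) simp

lemma sqmat_of_mat_of [simp]: "sqmat_of (mat_of x) = x"
  by (rule mat_of_inverse)

lemma norm_sqmat_of: "norm (sqmat_of M) = spec_norm M"
  by (simp add: norm_sqmat.abs_eq)

lemma sqmat_of_zero: "sqmat_of 0 = 0"
  by (simp add: zero_sqmat.abs_eq)

lemma sqmat_of_diff: "sqmat_of (M - N) = sqmat_of M - sqmat_of N"
  by (simp add: minus_sqmat.abs_eq)

lemma sqmat_of_scaleR: "sqmat_of (c *\<^sub>R M) = c *\<^sub>R sqmat_of M"
  by (simp add: scaleR_sqmat.abs_eq)

lemma sqmat_of_mat_1: "sqmat_of (mat 1) = 1"
  by (simp add: one_sqmat.abs_eq)

lemma sqmat_of_matrix_mult: "sqmat_of (M ** N) = sqmat_of M * sqmat_of N"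
  by (simp add: times_sqmat.abs_eq)

lemma sqmat_of_mpow: "sqmat_of (mpow M k) = sqmat_of M ^ k"
  by (induction k) (simp_all add: mpow_def sqmat_of_mat_1 sqmat_of_matrix_mult)

lemma mexp_eq_mat_of_exp: "mexp M = mat_of (exp (sqmat_of M))"
proof -
  have "(\<lambda>n. mat_of (sqmat_of M ^ n /\<^sub>R fact n)) sums mat_of (exp (sqmat_of M))"
    by (rule bounded_linear.sums[OF bounded_linear_mat_of exp_converges])
  moreover have "mat_of (sqmat_of M ^ n /\<^sub>R fact n) = (1 / fact n) *\<^sub>R mpow M n" for n
    by (simp add: scaleR_sqmat.rep_eq sqmat_of_mpow[symmetric] divide_inverse)
  ultimately show ?thesis
    unfolding mexp_def by (simp add: sums_iff)
qed

lemma mexp_zero: "mexp (0 :: real^'n^'n) = mat 1"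
  by (simp add: mexp_eq_mat_of_exp sqmat_of_zero one_sqmat.rep_eq)

lemma mlog_series_eq_mat_of_log1p_series:
  assumes "spec_norm M < 1"
  shows "mlog_series M = mat_of (log1p_series (sqmat_of M))"
proof -
  have "(\<lambda>k. mat_of (((-1) ^ k / real (Suc k)) *\<^sub>R sqmat_of M ^ Suc k))
      sums mat_of (log1p_series (sqmat_of M))"
    unfolding log1p_series_def using assms
    by (intro bounded_linear.sums[OF bounded_linear_mat_of] summable_sums summable_log1p_series)
      (simp add: norm_sqmat_of)
  moreover have "mat_of (((-1) ^ k / real (Suc k)) *\<^sub>R sqmat_of M ^ Suc k)
      = ((-1) ^ k / real (Suc k)) *\<^sub>R mpow M (Suc k)" for k
    by (simp only: scaleR_sqmat.rep_eq sqmat_of_mpow[symmetric] mat_of_sqmat_of)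
  ultimately show ?thesis
    unfolding mlog_series_def by (simp add: sums_iff del: power_Suc of_nat_Suc)
qed

lemma integral_mat_of:
  fixes F :: "real \<Rightarrow> 'n::finite sqmat"
  assumes "F integrable_on S"
  shows "integral S (\<lambda>s. mat_of (F s)) = mat_of (integral S F)"
  using integral_linear[OF assms bounded_linear_mat_of] by (simp add: o_def)

lemma integral_mexp_scaleR:
  fixes f :: "real \<Rightarrow> real"
  assumes "continuous_on {a..b} f"
  shows "integral {a..b} (\<lambda>t. mexp (f t *\<^sub>R M)) = mat_of (integral {a..b} (\<lambda>t. exp (f t *\<^sub>R sqmat_of M)))"
  unfolding mexp_eq_mat_of_exp sqmat_of_scaleR
  by (intro integral_mat_of integrable_continuous_interval continuous_on_exp_scaleR assms)

lemma spec_norm_integral_mexp_diff_le: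
  assumes "0 \<le> h" "h * spec_norm M \<le> r" "h * spec_norm N \<le> r"
  shows "spec_norm (integral {0..h} (\<lambda>t. mexp (t *\<^sub>R M)) - integral {0..h} (\<lambda>t. mexp (t *\<^sub>R N)))
    \<le> exp r * spec_norm (M - N) * h\<^sup>2"
  using norm_integral_exp_scaleR_diff_le[of h "sqmat_of M" r "sqmat_of N"] assms
  by (simp add: integral_mexp_scaleR[OF continuous_on_id] norm_sqmat_of[symmetric] sqmat_of_diff)

lemma spec_norm_integral_mexp_minus_le:
  assumes "0 \<le> h" "h * spec_norm M \<le> r"
  shows "spec_norm (integral {0..h} (\<lambda>t. mexp (t *\<^sub>R M)) - h *\<^sub>R mat 1) \<le> exp r * r * h"
proof -
  have zero: "integral {0..h} (\<lambda>t. mexp (t *\<^sub>R 0)) = h *\<^sub>R mat 1"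
    using assms(1) by (simp add: mexp_zero)
  have "0 \<le> r"
    using assms spec_norm_nonneg[of M] by (meson mult_nonneg_nonneg order_trans)
  then have "spec_norm (integral {0..h} (\<lambda>t. mexp (t *\<^sub>R M)) - h *\<^sub>R mat 1) \<le> exp r * spec_norm (M - 0) * h\<^sup>2"
    unfolding zero[symmetric] using assms by (intro spec_norm_integral_mexp_diff_le) (auto simp: spec_norm_zero)
  also have "\<dots> = exp r * (h * spec_norm M) * h"
    by (simp add: power2_eq_square mult_ac)
  also have "\<dots> \<le> exp r * r * h"
    using assms by (intro mult_right_mono mult_left_mono) auto
  finally show ?thesis .
qed

lemma integral_mexp_reflect:
  "integral {0..h} (\<lambda>s. mexp ((h - s) *\<^sub>R M)) = integral {0..h} (\<lambda>t. mexp (t *\<^sub>R M))"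
  using integral_reflect_interval[of "\<lambda>t. exp (t *\<^sub>R sqmat_of M)" h]
  by (simp add: integral_mexp_scaleR continuous_on_diff integrable_continuous_interval
      continuous_on_exp_scaleR)

section \<open>Error of the identified continuous-time matrices\<close>

lemma spec_norm_drift_estimate_error_le:
  fixes A At :: "real^'n^'n"
  assumes h: "0 < h" and hA: "spec_norm (h *\<^sub>R A) \<le> 1/15"
    and At: "spec_norm (At - mexp (h *\<^sub>R A)) \<le> \<epsilon>" and \<epsilon>: "\<epsilon> \<le> 1/15"
  shows "spec_norm ((1/h) *\<^sub>R mlog_series (At - mat 1) - A) \<le> 50/43 * \<epsilon> / h"
proof -
  define x y where "x = sqmat_of At" and "y = sqmat_of (h *\<^sub>R A)"
  have y: "norm y \<le> 1/15" and x: "norm (x - exp y) \<le> \<epsilon>"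
    using hA At by (simp_all add: x_def y_def norm_sqmat_of[symmetric] sqmat_of_diff mexp_eq_mat_of_exp)
  have "spec_norm (At - mat 1) < 1"
    using log1p_series_perturbation(1)[OF y x \<epsilon>]
    by (simp add: x_def norm_sqmat_of[symmetric] sqmat_of_diff sqmat_of_mat_1)
  then have "sqmat_of ((1/h) *\<^sub>R mlog_series (At - mat 1) - A) = (1/h) *\<^sub>R (log1p_series (x - 1) - y)"
    using h by (simp add: mlog_series_eq_mat_of_log1p_series x_def y_def sqmat_of_diff sqmat_of_scaleR
        sqmat_of_mat_1 scaleR_diff_right)
  then have "spec_norm ((1/h) *\<^sub>R mlog_series (At - mat 1) - A) = norm (log1p_series (x - 1) - y) / h"
    using h by (simp add: norm_sqmat_of[symmetric])
  also have "\<dots> \<le> 50/43 * \<epsilon> / h"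
    using log1p_series_perturbation(2)[OF y x \<epsilon>] h by (intro divide_right_mono) auto
  finally show ?thesis .
qed

lemma spec_norm_input_error_le:
  fixes A Ah :: "real^'n^'n" and B Bt :: "real^'p^'n"
  assumes h: "0 < h" and A: "h * spec_norm A \<le> 3/20" and Ah: "h * spec_norm Ah \<le> 3/20"
    and Bt: "spec_norm (Bt - integral {0..h} (\<lambda>s. mexp ((h - s) *\<^sub>R A)) ** B) \<le> \<epsilon>"
  shows "spec_norm (matrix_inv (integral {0..h} (\<lambda>t. mexp (t *\<^sub>R Ah))) ** Bt - B)
    \<le> 50/41 * (\<epsilon> / h + 59/50 * h * spec_norm (A - Ah) * spec_norm B)"
proof -
  define G where "G M = integral {0..h} (\<lambda>t. mexp (t *\<^sub>R M))" for M :: "real^'n^'n"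
  have exp_3_20: "exp (3/20 :: real) \<le> 59/50"
    using exp_bound[of "3/20::real"] by (simp add: power2_eq_square)
  have "spec_norm (G Ah - h *\<^sub>R mat 1) \<le> exp (3/20) * (3/20) * h"
    unfolding G_def using h Ah by (intro spec_norm_integral_mexp_minus_le) auto
  also have "\<dots> \<le> 9/50 * h"
    using exp_3_20 h by simp
  finally have "spec_norm (G Ah - h *\<^sub>R mat 1) \<le> 9/50 * h" .
  moreover have "9/50 * h < h"
    using h by simp
  ultimately have inv: "invertible (G Ah)" and inv_le: "spec_norm (matrix_inv (G Ah)) \<le> 1 / (h - 9/50 * h)"
    by (rule invertible_near_scaled_identity)+
  have B_err: "spec_norm (Bt - G A ** B) \<le> \<epsilon>"
    using Bt by (simp add: G_def integral_mexp_reflect)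
  have "spec_norm (G A - G Ah) \<le> exp (3/20) * spec_norm (A - Ah) * h\<^sup>2"
    unfolding G_def using h A Ah by (intro spec_norm_integral_mexp_diff_le) auto
  also have "\<dots> \<le> 59/50 * spec_norm (A - Ah) * h\<^sup>2"
    using exp_3_20 spec_norm_nonneg[of "A - Ah"] by (intro mult_right_mono) auto
  finally have G_diff: "spec_norm (G A - G Ah) \<le> 59/50 * spec_norm (A - Ah) * h\<^sup>2" .
  have "spec_norm (matrix_inv (G Ah) ** Bt - B)
      \<le> spec_norm (matrix_inv (G Ah)) * (spec_norm (Bt - G A ** B) + spec_norm (G A - G Ah) * spec_norm B)"
    by (rule spec_norm_matrix_inv_mult_diff_le[OF inv])
  also have "\<dots> \<le> 1 / (h - 9/50 * h) * (\<epsilon> + 59/50 * spec_norm (A - Ah) * h\<^sup>2 * spec_norm B)"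
    using inv_le B_err G_diff h
    by (intro mult_mono add_mono mult_right_mono spec_norm_nonneg add_nonneg_nonneg mult_nonneg_nonneg) auto
  also have "\<dots> = 50/41 * (\<epsilon> / h + 59/50 * h * spec_norm (A - Ah) * spec_norm B)"
    using h by (simp add: field_simps power2_eq_square)
  finally show ?thesis
    unfolding G_def .
qed

lemma spec_norm_input_estimate_error_le:
  fixes A At :: "real^'n^'n" and B Bt :: "real^'p^'n"
  assumes h: "0 < h" and hA: "spec_norm (h *\<^sub>R A) \<le> 1/15"
    and At: "spec_norm (At - mexp (h *\<^sub>R A)) \<le> \<epsilon>" and \<epsilon>: "\<epsilon> \<le> 1/15"
    and Bt: "spec_norm (Bt - integral {0..h} (\<lambda>s. mexp ((h - s) *\<^sub>R A)) ** B) \<le> \<epsilon>"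
  shows "spec_norm (matrix_inv (integral {0..h} (\<lambda>t. mexp (t *\<^sub>R ((1/h) *\<^sub>R mlog_series (At - mat 1))))) ** Bt - B)
    \<le> 50/41 * (\<epsilon> / h + 59/43 * \<epsilon> * spec_norm B)"
proof -
  define Ah where "Ah = (1/h) *\<^sub>R mlog_series (At - mat 1)"
  have drift: "spec_norm (A - Ah) \<le> 50/43 * \<epsilon> / h"
    unfolding Ah_def spec_norm_minus_commute[of A] by (rule spec_norm_drift_estimate_error_le[OF h hA At \<epsilon>])
  have hA': "h * spec_norm A \<le> 1/15"
    using hA h by (simp add: spec_norm_scaleR)
  have "h * spec_norm Ah \<le> h * spec_norm A + h * spec_norm (A - Ah)"
    using spec_norm_add_le[of A "Ah - A"] h spec_norm_minus_commute[of A Ah]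
    by (simp add: distrib_left[symmetric])
  also have "\<dots> \<le> 1/15 + 50/43 * \<epsilon>"
    using hA' drift h by (intro add_mono) (simp_all add: field_simps)
  finally have hAh: "h * spec_norm Ah \<le> 3/20"
    using \<epsilon> by simp
  have "spec_norm (matrix_inv (integral {0..h} (\<lambda>t. mexp (t *\<^sub>R Ah))) ** Bt - B)
      \<le> 50/41 * (\<epsilon> / h + 59/50 * h * spec_norm (A - Ah) * spec_norm B)"
    using h hA' hAh Bt by (intro spec_norm_input_error_le) auto
  also have "\<dots> \<le> 50/41 * (\<epsilon> / h + 59/50 * h * (50/43 * \<epsilon> / h) * spec_norm B)"
    using drift h spec_norm_nonneg[of B] by (intro mult_left_mono add_left_mono mult_right_mono) auto
  also have "\<dots> = 50/41 * (\<epsilon> / h + 59/43 * \<epsilon> * spec_norm B)"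
    using h by (simp add: field_simps)
  finally show ?thesis
    unfolding Ah_def .
qed

theorem lemma2:
  fixes A :: "real^'d^'d" and B :: "real^'p^'d"
    and At :: "real^'d^'d" and Bt :: "real^'p^'d"
    and \<kappa>A \<kappa>B h \<epsilon> :: real
  assumes "spectral_abscissa A < 0"
    and "\<kappa>A > 0" and "\<kappa>B > 0"
    and "spec_norm A \<le> \<kappa>A" and "spec_norm B \<le> \<kappa>B"
    and "h = 1 / (15 * \<kappa>A)"
    and "spec_norm (At - mexp (h *\<^sub>R A)) \<le> \<epsilon>"
    and "spec_norm (Bt - integral {0..h} (\<lambda>s. mexp ((h - s) *\<^sub>R A)) ** B) \<le> \<epsilon>"
    and "\<epsilon> \<le> 1 / 15"
    and "spec_norm (h *\<^sub>R A) \<le> 1 / 15"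
  shows "spec_norm ((1 / h) *\<^sub>R mlog_series (At - mat 1) - A) \<le> (1 / h) * (2 + \<kappa>B / \<kappa>A) * \<epsilon>
     \<and> spec_norm (matrix_inv (integral {0..h} (\<lambda>t. mexp (t *\<^sub>R ((1 / h) *\<^sub>R mlog_series (At - mat 1))))) ** Bt - B)
         \<le> (1 / h) * (2 + \<kappa>B / \<kappa>A) * \<epsilon>"
proof -
  have h: "0 < h" and \<epsilon>: "0 \<le> \<epsilon>"
    using assms(2,6,7) spec_norm_nonneg order_trans by auto
  have bound: "(1 / h) * (2 + \<kappa>B / \<kappa>A) * \<epsilon> = 2 * \<epsilon> / h + 15 * (\<epsilon> * \<kappa>B)"
    using assms(2) unfolding assms(6) by (simp add: field_simps)
  note A_hat = spec_norm_drift_estimate_error_le[OF h assms(10,7,9)]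
  note B_hat = spec_norm_input_estimate_error_le[OF h assms(10,7,9,8)]
  have "50/43 * \<epsilon> / h \<le> (1 / h) * (2 + \<kappa>B / \<kappa>A) * \<epsilon>"
    unfolding bound using h \<epsilon> assms(3) by (intro add_increasing2 divide_right_mono) auto
  moreover have "50/41 * (\<epsilon> / h + 59/43 * \<epsilon> * spec_norm B) \<le> (1 / h) * (2 + \<kappa>B / \<kappa>A) * \<epsilon>"
  proof -
    have "50/41 * (\<epsilon> / h + 59/43 * \<epsilon> * spec_norm B) = 50/41 * \<epsilon> / h + 2950/1763 * (\<epsilon> * spec_norm B)"
      by (simp add: field_simps)
    also have "\<dots> \<le> 2 * \<epsilon> / h + 15 * (\<epsilon> * \<kappa>B)"
      using h \<epsilon> assms(5) spec_norm_nonneg[of B]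
      by (intro add_mono divide_right_mono mult_mono mult_left_mono) auto
    finally show ?thesis
      unfolding bound .
  qed
  ultimately show ?thesis
    using A_hat B_hat by linarith
qed

end
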